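(* Let $T\subseteq\mathfrak{S}_n$ be invariant under the modified Foata–Strehl action. Then $\Psi'$ restricts to a bijection $T\to T$, and $\operatorname{veh}(\pi)=\operatorname{des}(\Psi'(\pi))$ for all $\pi\in T$.
   Context: Permutations $\pi\in\mathfrak{S}_n$ are words $a_1\cdots a_n$; $\operatorname{des}(\pi)=|\{i\in[n-1]:a_i>a_{i+1}\}|$. Set $a_0=a_{n+1}=n+1$; a letter $a_k$ is a valley if $a_{k-1}>a_k<a_{k+1}$, a peak if $a_{k-1}<a_k>a_{k+1}$, a double ascent if $a_{k-1}<a_k<a_{k+1}$, a double descent if $a_{k-1}>a_k>a_{k+1}$. For $x\in[n]$: if $x$ is a double descent, $\varphi'_x(\pi)$ moves $x$ to between the first pair of consecutive letters $a_i,a_{i+1}$ to the right of $x$ with $a_i<x<a_{i+1}$; if a double ascent, to between the first pair to the left with $a_i>x>a_{i+1}$; if a peak or valley, $\varphi'_x(\pi)=\pi$. The modified Foata–Strehl action is the $\mathbb{Z}_2^n$-action generated by these commuting involutions; $T$ is invariant if $\varphi'_x(T)\subseteq T$ for all $x$. The decreasing binary tree of a word $w$: empty if $w$ empty; otherwise $w=LmR$ with $m$ the greatest letter, root $m$, left subtree the tree of $L$, right subtree the tree of $R$. $r_\pi(x)$ is the number of right edges on the root-to-$x$ path in the tree of $\pi$, $\operatorname{Odd}(\pi)=\{x:r_\pi(x)\text{ odd}\}$, and $\Psi'(\pi)=\prod_{x\in\operatorname{Odd}(\pi)}\varphi'_x(\pi)$. The unordered decreasing tree $T(w;\infty)$ ($\infty$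 a symbol larger than all letters): if $w$ is empty it is a single vertex $\infty$; otherwise write $w=m_1w_1m_2w_2\cdots m_kw_k$ with $m_1,\dots,m_k$ the left-to-right maxima of $w$, and $T(w;\infty)$ has root $\infty$ with subtrees $T(w_i;m_i)$ (defined in the same way with root labeled $m_i$). $\operatorname{veh}(\pi)$ is the number of non-root vertices of even height (root at height $0$) in $T(\pi;\infty)$. *)

theory Defs
  imports Main "HOL-Library.Tree"
begin

text \<open>Permutations of [n] as words a_1 ... a_n (lists, 0-indexed internally).\<close>
definition perms :: "nat \<Rightarrow> nat list set" where
  "perms n = {w. distinct w \<and> set w = {1..n}}"

definition des :: "nat list \<Rightarrow> nat" where
  "des w = card {i. Suc i < length w \<and> w ! i > w ! Suc i}"

text \<open>Neighbours in the extended word a_0 = a_{n+1} = n+1 (n = length w),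
  for the letter at 0-based position k of w.\<close>
definition lnb :: "nat list \<Rightarrow> nat \<Rightarrow> nat" where
  "lnb w k = (if k = 0 then Suc (length w) else w ! (k - 1))"

definition rnb :: "nat list \<Rightarrow> nat \<Rightarrow> nat" where
  "rnb w k = (if Suc k = length w then Suc (length w) else w ! Suc k)"

definition pos :: "nat list \<Rightarrow> nat \<Rightarrow> nat" where
  "pos w x = (LEAST k. k < length w \<and> w ! k = x)"

definition is_ddes :: "nat list \<Rightarrow> nat \<Rightarrow> bool" where
  "is_ddes w x = (x \<in> set w \<and> lnb w (pos w x) > x \<and> x > rnb w (pos w x))"

definition is_dasc :: "nat list \<Rightarrow> nat \<Rightarrow> bool" where
  "is_dasc w x = (x \<in> set w \<and> lnb w (pos w x) < x \<and> x < rnb w (pos w x))"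

definition move_to :: "nat list \<Rightarrow> nat \<Rightarrow> nat \<Rightarrow> nat \<Rightarrow> nat list" where
  "move_to w k j x = (let u = take k w @ drop (Suc k) w in take j u @ [x] @ drop j u)"

definition phi :: "nat \<Rightarrow> nat list \<Rightarrow> nat list" where
  "phi x w =
    (if is_ddes w x then
       (let k = pos w x;
            j = (LEAST j. k < j \<and> j < length w \<and> w ! j < x \<and> x < rnb w j)
        in move_to w k j x)
     else if is_dasc w x then
       (let k = pos w x;
            j = (GREATEST j. j < k \<and> w ! j < x \<and> x < lnb w j)
        in move_to w k j x)
     else w)"

function dbt :: "nat list \<Rightarrow> nat tree" where
  "dbt w = (if w = [] then Leaf else
     Node (dbt (takeWhile (\<lambda>y. y \<noteq> Max (set w)) w))
          (Max (set w))
          (dbt (tl (dropWhile (\<lambda>y. y \<noteq> Max (set w)) w))))"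
  by pat_completeness auto
termination
proof (relation "measure length", goal_cases)
  case 1 show ?case by simp
next
  case (2 w)
  then have "Max (set w) \<in> set w" by simp
  then have "dropWhile (\<lambda>y. y \<noteq> Max (set w)) w \<noteq> []" by (simp add: dropWhile_eq_Nil_conv)
  moreover have "length (takeWhile (\<lambda>y. y \<noteq> Max (set w)) w) + length (dropWhile (\<lambda>y. y \<noteq> Max (set w)) w) = length w"
    by (metis length_append takeWhile_dropWhile_id)
  ultimately show ?case by (cases "dropWhile (\<lambda>y. y \<noteq> Max (set w)) w") auto
next
  case (3 w)
  have "length (dropWhile (\<lambda>y. y \<noteq> Max (set w)) w) \<le> length w" by (rule length_dropWhile_le)
  moreover from 3 have "length w > 0" by simp
  ultimately show ?case by (cases w) auto
qed

fun rdist :: "nat tree \<Rightarrow> nat \<Rightarrow> nat option" where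
  "rdist Leaf x = None"
| "rdist (Node l a r) x =
     (if x = a then Some 0
      else case rdist l x of Some d \<Rightarrow> Some d | None \<Rightarrow> map_option Suc (rdist r x))"

definition Odd_set :: "nat list \<Rightarrow> nat set" where
  "Odd_set w = {x \<in> set w. odd (the (rdist (dbt w) x))}"

text \<open>Psi'(pi) = prod_{x in Odd(pi)} phi'_x(pi); the phi'_x commute, so they are
  applied in increasing order of x.\<close>
definition Psi :: "nat list \<Rightarrow> nat list" where
  "Psi w = foldr phi (sorted_list_of_set (Odd_set w)) w"

text \<open>Height of a letter y in the unordered decreasing tree T(w;\<infinity>) (root at height 0).
  Writing w = m_1 w_1 m_2 w_2 ..., the first block is m_1 = hd w and
  w_1 = the maximal following run of letters smaller than m_1; y in w_1 lies in T(w_1;m_1).\<close>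
function uht :: "nat list \<Rightarrow> nat \<Rightarrow> nat" where
  "uht [] y = 0"
| "uht (m # rest) y =
     (if y = m then 1
      else if y \<in> set (takeWhile (\<lambda>z. z < m) rest)
           then Suc (uht (takeWhile (\<lambda>z. z < m) rest) y)
      else uht (dropWhile (\<lambda>z. z < m) rest) y)"
  by pat_completeness auto
termination
  by (relation "measure (\<lambda>(w, y). length w)")
     (auto simp: le_imp_less_Suc length_takeWhile_le length_dropWhile_le)

definition veh :: "nat list \<Rightarrow> nat" where
  "veh w = card {y \<in> set w. even (uht w y)}"

end

theory Submission
  imports Defs
begin

text \<open>A permutation is the in-order reading of its decreasing binary tree. In that tree a letter
  is a peak or a valley iff it has two or no children, and a double ascent or descent iff it has
  exactly one; \<open>\<phi>'\<^sub>x\<close> reads off the tree in which the sole child of \<open>x\<close> changes sides.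
  Hence \<open>\<Psi>'\<close> flips the sole children of the nodes at odd right distance. The flipped tree
  determines the original one (parities are recovered top-down), so \<open>\<Psi>'\<close> is injective, and
  an invariant set is finite, so \<open>\<Psi>'\<close> permutes it. Descents of an in-order reading are the
  nonempty right subtrees; after the flip they correspond exactly to the nodes at odd right
  distance, which are the vertices of even height of \<open>T(\<pi>;\<infinity>)\<close>, as height there is one plus
  the right distance.\<close>

declare dbt.simps[simp del]

section \<open>Decreasing binary trees and flipping sole children\<close>

fun decr_tree :: "nat tree \<Rightarrow> bool" where
  "decr_tree Leaf = True"
| "decr_tree (Node l a r) =
     (decr_tree l \<and> decr_tree r \<and> (\<forall>y\<in>set_tree l. y < a) \<and> (\<forall>y\<in>set_tree r. y < a))"

fun flip_unary :: "nat set \<Rightarrow> nat tree \<Rightarrow> nat tree" where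
  "flip_unary S Leaf = Leaf"
| "flip_unary S (Node l a r) =
     (if a \<in> S \<and> (l = Leaf) \<noteq> (r = Leaf) then Node (flip_unary S r) a (flip_unary S l)
      else Node (flip_unary S l) a (flip_unary S r))"

text \<open>\<open>odd_nodes p t\<close> and \<open>flip_odd p t\<close> treat \<open>t\<close> as a subtree whose root has right
  distance \<open>p\<close> in the whole tree; \<open>flip_odd\<close> keeps these parities of the unflipped tree
  for the subtrees it moves.\<close>

fun odd_nodes :: "nat \<Rightarrow> nat tree \<Rightarrow> nat set" where
  "odd_nodes p Leaf = {}"
| "odd_nodes p (Node l a r) = odd_nodes p l \<union> odd_nodes (Suc p) r \<union> (if odd p then {a} else {})"

fun flip_odd :: "nat \<Rightarrow> nat tree \<Rightarrow> nat tree" where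
  "flip_odd p Leaf = Leaf"
| "flip_odd p (Node l a r) =
     (if odd p \<and> (l = Leaf) \<noteq> (r = Leaf) then Node (flip_odd (Suc p) r) a (flip_odd p l)
      else Node (flip_odd p l) a (flip_odd (Suc p) r))"

fun right_children :: "nat tree \<Rightarrow> nat" where
  "right_children Leaf = 0"
| "right_children (Node l a r) = right_children l + right_children r + (if r = Leaf then 0 else 1)"

lemma flip_unary_eq_Leaf_iff [simp]: "flip_unary S t = Leaf \<longleftrightarrow> t = Leaf"
  by (cases t) auto

lemma flip_odd_eq_Leaf_iff [simp]:
  "flip_odd p t = Leaf \<longleftrightarrow> t = Leaf" "Leaf = flip_odd p t \<longleftrightarrow> t = Leaf"
  by (cases t; auto)+

lemma set_flip_unary [simp]: "set_tree (flip_unary S t) = set_tree t"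
  by (induction t) auto

lemma size_flip_unary [simp]: "size (flip_unary S t) = size t"
  by (induction t) auto

lemma decr_tree_flip_unary: "decr_tree t \<Longrightarrow> decr_tree (flip_unary S t)"
  by (induction t) auto

lemma distinct_flip_unary: "distinct (inorder t) \<Longrightarrow> distinct (inorder (flip_unary S t))"
  by (induction t) auto

lemma flip_unary_empty [simp]: "flip_unary {} t = t"
  by (induction t) auto

lemma flip_unary_cong: "S \<inter> set_tree t = S' \<inter> set_tree t \<Longrightarrow> flip_unary S t = flip_unary S' t"
proof (induction t)
  case Leaf
  then show ?case by simp
next
  case (Node l a r)
  then have "S \<inter> set_tree l = S' \<inter> set_tree l" "S \<inter> set_tree r = S' \<inter> set_tree r" "a \<in> S \<longleftrightarrow> a \<in> S'"
    by auto
  with Node.IH show ?case by simp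
qed

lemma flip_unary_restrict: "flip_unary S t = flip_unary (S \<inter> set_tree t) t"
  by (rule flip_unary_cong) auto

lemma flip_unary_notin: "x \<notin> set_tree t \<Longrightarrow> flip_unary {x} t = t"
  by (induction t) auto

lemma flip_unary_insert_notin: "x \<notin> set_tree t \<Longrightarrow> flip_unary (insert x S) t = flip_unary S t"
  by (metis Int_insert_left flip_unary_restrict)

lemma flip_unary_flip_unary:
  "distinct (inorder t) \<Longrightarrow> x \<notin> S \<Longrightarrow> flip_unary {x} (flip_unary S t) = flip_unary (insert x S) t"
proof (induction t)
  case Leaf
  then show ?case by simp
next
  case (Node l a r)
  then show ?case
    by (cases "x = a") (auto simp: flip_unary_notin flip_unary_insert_notin)
qed

lemma odd_nodes_subset: "odd_nodes p t \<subseteq> set_tree t"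
  by (induction t arbitrary: p) auto

lemma finite_odd_nodes: "finite (odd_nodes p t)"
  by (rule finite_subset[OF odd_nodes_subset]) simp

lemma flip_odd_eq_flip_unary: "distinct (inorder t) \<Longrightarrow> flip_odd p t = flip_unary (odd_nodes p t) t"
proof (induction t arbitrary: p)
  case Leaf
  then show ?case by simp
next
  case (Node l a r)
  have disj: "a \<notin> set_tree l" "a \<notin> set_tree r" "set_tree l \<inter> set_tree r = {}"
    using Node.prems by auto
  then have "odd_nodes p (Node l a r) \<inter> set_tree l = odd_nodes p l"
    and "odd_nodes p (Node l a r) \<inter> set_tree r = odd_nodes (Suc p) r"
    and root: "a \<in> odd_nodes p (Node l a r) \<longleftrightarrow> odd p"
    using odd_nodes_subset[of p l] odd_nodes_subset[of "Suc p" r] by auto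
  then have "flip_unary (odd_nodes p (Node l a r)) l = flip_unary (odd_nodes p l) l"
    and "flip_unary (odd_nodes p (Node l a r)) r = flip_unary (odd_nodes (Suc p) r) r"
    by (metis flip_unary_restrict)+
  moreover have "distinct (inorder l)" "distinct (inorder r)"
    using Node.prems by auto
  ultimately show ?case
    using root by (simp only: flip_odd.simps flip_unary.simps Node.IH)
qed

lemma decr_tree_flip_odd:
  "decr_tree t \<Longrightarrow> distinct (inorder t) \<Longrightarrow> decr_tree (flip_odd p t) \<and> distinct (inorder (flip_odd p t))"
  by (simp add: flip_odd_eq_flip_unary decr_tree_flip_unary distinct_flip_unary)

lemma flip_odd_inject: "flip_odd p t = flip_odd p t' \<Longrightarrow> t = t'"
proof (induction t arbitrary: p t')
  case Leaf
  then show ?case by (metis flip_odd_eq_Leaf_iff)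
next
  case (Node l a r)
  then obtain l' a' r' where "t' = Node l' a' r'"
    by (metis flip_odd_eq_Leaf_iff tree.exhaust)
  with Node show ?case
    by (auto split: if_splits)
qed

lemma right_children_flip_odd:
  "distinct (inorder t) \<Longrightarrow>
   right_children (flip_odd p t) + (if t \<noteq> Leaf \<and> odd p then 1 else 0) = card (odd_nodes p t)"
proof (induction t arbitrary: p)
  case Leaf
  then show ?case by simp
next
  case (Node l a r)
  have "odd_nodes p l \<inter> odd_nodes (Suc p) r = {}" "a \<notin> odd_nodes p l \<union> odd_nodes (Suc p) r"
    using Node.prems odd_nodes_subset[of p l] odd_nodes_subset[of "Suc p" r] by auto
  then have "card (odd_nodes p (Node l a r))
      = card (odd_nodes p l) + card (odd_nodes (Suc p) r) + (if odd p then 1 else 0)"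
    by (simp add: card_Un_disjoint finite_odd_nodes)
  moreover have "right_children (flip_odd p l) + (if l \<noteq> Leaf \<and> odd p then 1 else 0) = card (odd_nodes p l)"
    and "right_children (flip_odd (Suc p) r) + (if r \<noteq> Leaf \<and> even p then 1 else 0)
      = card (odd_nodes (Suc p) r)"
    using Node.prems Node.IH(1)[of p] Node.IH(2)[of "Suc p"] by auto
  ultimately show ?case
    by (auto split: if_splits)
qed

section \<open>The decreasing binary tree of a word\<close>

lemma dbt_Nil [simp]: "dbt [] = Leaf"
  by (subst dbt.simps) simp

lemma dbt_append_Cons:
  assumes "distinct (xs @ m # ys)" "\<forall>z\<in>set xs \<union> set ys. z < m"
  shows "dbt (xs @ m # ys) = Node (dbt xs) m (dbt ys)"
proof -
  have "Max (set (xs @ m # ys)) = m"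
    using assms(2) by (intro Max_eqI) (auto intro: less_imp_le)
  moreover have "\<forall>z\<in>set xs. z \<noteq> m"
    using assms(1) by auto
  ultimately show ?thesis
    by (subst dbt.simps) (simp add: takeWhile_append2 dropWhile_append2)
qed

lemma split_at_Max:
  fixes w :: "nat list"
  assumes "distinct w" "w \<noteq> []"
  obtains xs m ys where "w = xs @ m # ys" "\<forall>z\<in>set xs \<union> set ys. z < m"
proof -
  define m where "m = Max (set w)"
  have "m \<in> set w"
    using assms(2) unfolding m_def by simp
  then obtain xs ys where w: "w = xs @ m # ys"
    by (meson split_list)
  have "\<forall>z\<in>set w. z \<le> m"
    unfolding m_def by simp
  then have "\<forall>z\<in>set xs \<union> set ys. z \<le> m"
    unfolding w by simp
  moreover have "\<forall>z\<in>set xs \<union> set ys. z \<noteq> m"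
    using assms(1) unfolding w by auto
  ultimately show ?thesis
    using that w by force
qed

lemma inorder_dbt: "distinct w \<Longrightarrow> inorder (dbt w) = w \<and> decr_tree (dbt w)"
proof (induction "length w" arbitrary: w rule: less_induct)
  case less
  show ?case
  proof (cases "w = []")
    case True
    then show ?thesis by simp
  next
    case False
    obtain xs m ys where w: "w = xs @ m # ys" and lt: "\<forall>z\<in>set xs \<union> set ys. z < m"
      using split_at_Max[OF less.prems False] by blast
    have "length xs < length w" "length ys < length w" "distinct xs" "distinct ys"
      using less.prems unfolding w by auto
    then have IH: "inorder (dbt xs) = xs \<and> decr_tree (dbt xs)" "inorder (dbt ys) = ys \<and> decr_tree (dbt ys)"
      using less.hyps by blast+
    then have "set_tree (dbt xs) = set xs" "set_tree (dbt ys) = set ys"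
      by (metis set_inorder)+
    moreover have "dbt w = Node (dbt xs) m (dbt ys)"
      using less.prems lt unfolding w by (intro dbt_append_Cons)
    ultimately show ?thesis
      using IH lt w by simp
  qed
qed

lemma set_dbt: "distinct w \<Longrightarrow> set_tree (dbt w) = set w"
  by (metis inorder_dbt set_inorder)

lemma dbt_inorder: "decr_tree t \<Longrightarrow> distinct (inorder t) \<Longrightarrow> dbt (inorder t) = t"
proof (induction t)
  case Leaf
  then show ?case by simp
next
  case (Node l a r)
  then have "dbt (inorder l @ a # inorder r) = Node (dbt (inorder l)) a (dbt (inorder r))"
    by (intro dbt_append_Cons) auto
  with Node show ?case
    by auto
qed

lemma rdist_eq_None_iff: "rdist t y = None \<longleftrightarrow> y \<notin> set_tree t"
  by (induction t) (auto split: option.splits)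

text \<open>Appending a block whose first letter exceeds everything before it hangs the tree of the
  prefix below the left spine of the tree of the block, without changing right distances.\<close>

lemma rdist_dbt_append:
  assumes "distinct (A @ B)" "B \<noteq> []" "\<forall>a\<in>set A. a < hd B"
  shows "rdist (dbt (A @ B)) y = (if y \<in> set A then rdist (dbt A) y else rdist (dbt B) y)"
  using assms
proof (induction "length B" arbitrary: B rule: less_induct)
  case less
  obtain xs m ys where B: "B = xs @ m # ys" and lt: "\<forall>z\<in>set xs \<union> set ys. z < m"
    using split_at_Max[of B] less.prems by auto
  have "hd B \<le> m"
    using lt B by (cases xs) auto
  then have Am: "\<forall>a\<in>set A. a < m"
    using less.prems(3) by force
  have dist: "distinct (A @ xs @ m # ys)"
    using less.prems(1) unfolding B .
  have tree_AB: "dbt (A @ B) = Node (dbt (A @ xs)) m (dbt ys)"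
    using dbt_append_Cons[of "A @ xs" m ys] dist Am lt unfolding B by auto
  have tree_B: "dbt B = Node (dbt xs) m (dbt ys)"
    using dbt_append_Cons[of xs m ys] dist lt unfolding B by auto
  have left: "rdist (dbt (A @ xs)) y = (if y \<in> set A then rdist (dbt A) y else rdist (dbt xs) y)"
  proof (cases "xs = []")
    case True
    then show ?thesis
      using dist by (simp add: rdist_eq_None_iff set_dbt)
  next
    case False
    moreover have "distinct (A @ xs)" "length xs < length B" "\<forall>a\<in>set A. a < hd xs"
      using dist less.prems(3) False unfolding B by auto
    ultimately show ?thesis
      using less.hyps by blast
  qed
  show ?case
    unfolding tree_AB tree_B using dist
    by (auto simp: left B rdist_eq_None_iff set_dbt split: option.splits)
qed

lemma rdist_dbt_uht:
  "distinct w \<Longrightarrow> y \<in> set w \<Longrightarrow> rdist (dbt w) y = Some (uht w y - 1) \<and> 0 < uht w y"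
proof (induction w y rule: uht.induct)
  case (1 y)
  then show ?case by simp
next
  case (2 m rest y)
  define w1 where "w1 = takeWhile (\<lambda>z. z < m) rest"
  define w2 where "w2 = dropWhile (\<lambda>z. z < m) rest"
  have rest: "rest = w1 @ w2"
    unfolding w1_def w2_def by simp
  have w1_less: "\<forall>z\<in>set w1. z < m"
    unfolding w1_def by (meson set_takeWhileD)
  have dist: "distinct (m # w1 @ w2)"
    using "2.prems"(1) rest by simp
  have "dbt (m # w1) = Node Leaf m (dbt w1)"
    using dbt_append_Cons[of "[]" m w1] dist w1_less by auto
  then have first_block:
    "rdist (dbt (m # w1)) y = (if y = m then Some 0 else map_option Suc (rdist (dbt w1) y))"
    by simp
  have blocks: "rdist (dbt (m # rest)) y
      = (if y \<in> set (m # w1) then rdist (dbt (m # w1)) y else rdist (dbt w2) y)"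
  proof (cases "w2 = []")
    case True
    then show ?thesis
      using rest dist by (simp add: rdist_eq_None_iff set_dbt)
  next
    case False
    then have "m < hd w2"
      using dist hd_dropWhile[of "\<lambda>z. z < m" rest] hd_in_set[of w2] unfolding w2_def
      by (metis Un_iff distinct.simps(2) linorder_neqE_nat set_append rest w2_def)
    then have "\<forall>a\<in>set (m # w1). a < hd w2"
      using w1_less by auto
    then show ?thesis
      using rdist_dbt_append[of "m # w1" w2 y] dist False rest by simp
  qed
  consider "y = m" | "y \<noteq> m" "y \<in> set w1" | "y \<noteq> m" "y \<notin> set w1" "y \<in> set w2"
    using "2.prems"(2) rest by auto
  then show ?case
  proof cases
    case 1
    then show ?thesis
      using blocks first_block by simp
  next
    case 2
    then have "rdist (dbt w1) y = Some (uht w1 y - 1) \<and> 0 < uht w1 y"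
      using "2.IH"(1) dist unfolding w1_def by auto
    then show ?thesis
      using 2 blocks first_block unfolding w1_def by simp
  next
    case 3
    then have "rdist (dbt w2) y = Some (uht w2 y - 1) \<and> 0 < uht w2 y"
      using "2.IH"(2) dist unfolding w1_def w2_def by auto
    then show ?thesis
      using 3 blocks unfolding w1_def w2_def by simp
  qed
qed

section \<open>Descents of an in-order reading\<close>

fun descents :: "nat list \<Rightarrow> nat" where
  "descents (x # y # zs) = (if y < x then 1 else 0) + descents (y # zs)"
| "descents _ = 0"

lemma des_eq_descents: "des w = descents w"
proof (induction w rule: descents.induct)
  case (1 x y zs)
  let ?D = "\<lambda>w. {i. Suc i < length w \<and> w ! Suc i < w ! i}"
  have "?D (x # y # zs) = (if y < x then {0} else {}) \<union> Suc ` ?D (y # zs)"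
  proof (intro set_eqI iffI)
    fix i
    assume "i \<in> ?D (x # y # zs)"
    then show "i \<in> (if y < x then {0} else {}) \<union> Suc ` ?D (y # zs)"
      by (cases i) auto
  qed (auto split: if_splits)
  moreover have "card ((if y < x then {0} else {}) \<union> Suc ` ?D (y # zs))
      = (if y < x then 1 else 0) + card (?D (y # zs))"
    by (auto simp: card_image)
  ultimately show ?case
    using 1 unfolding des_def by simp
qed (simp_all add: des_def)

lemma descents_append:
  "descents (xs @ ys)
   = descents xs + descents ys + (if xs \<noteq> [] \<and> ys \<noteq> [] \<and> hd ys < last xs then 1 else 0)"
proof (induction xs rule: descents.induct)
  case ("2_2" x)
  then show ?case by (cases ys) auto
qed simp_all

lemma descents_inorder: "decr_tree t \<Longrightarrow> descents (inorder t) = right_children t"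
proof (induction t)
  case Leaf
  then show ?case by simp
next
  case (Node l a r)
  have last_l: "l \<noteq> Leaf \<Longrightarrow> last (inorder l) \<in> set_tree l"
    and hd_r: "r \<noteq> Leaf \<Longrightarrow> hd (inorder r) \<in> set_tree r"
    by (metis last_in_set hd_in_set eq_inorder_Nil set_inorder)+
  have "descents (inorder l @ [a] @ inorder r) = descents (inorder l) + descents ([a] @ inorder r)"
    using Node.prems last_l by (subst descents_append) force
  also have "descents ([a] @ inorder r) = descents (inorder r) + (if r = Leaf then 0 else 1)"
    using Node.prems hd_r by (subst descents_append) force
  finally show ?case
    using Node by simp
qed

section \<open>The involutions \<open>\<phi>'\<^sub>x\<close> on words\<close>

lemma pos_append_Cons: "distinct (u @ x # v) \<Longrightarrow> pos (u @ x # v) x = length u"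
  unfolding pos_def
proof (rule Least_equality)
  fix k
  assume "distinct (u @ x # v)" "k < length (u @ x # v) \<and> (u @ x # v) ! k = x"
  then have "k = length u"
    using nth_eq_iff_index_eq[of "u @ x # v" k "length u"] by simp
  then show "length u \<le> k"
    by simp
qed (simp add: nth_append)

lemma lnb_append_Cons:
  "lnb (u @ x # v) (length u) = (if u = [] then Suc (length (u @ x # v)) else last u)"
  by (cases u rule: rev_cases) (auto simp: lnb_def nth_append)

lemma rnb_append_Cons:
  "rnb (u @ x # v) (length u) = (if v = [] then Suc (length (u @ x # v)) else hd v)"
  by (cases v) (auto simp: rnb_def nth_append)

lemma phi_eq_self: "\<not> is_ddes w x \<Longrightarrow> \<not> is_dasc w x \<Longrightarrow> phi x w = w"
  by (simp add: phi_def)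

lemma phi_double_descent:
  assumes "distinct w" and w: "w = p @ x # R @ s" and "R \<noteq> []" and R_less: "\<forall>y\<in>set R. y < x"
    and "p = [] \<or> x < last p" and "s = [] \<or> x < hd s" and "x < Suc (length w)"
  shows "phi x w = p @ R @ x # s"
proof -
  define j where "j = length p + length R"
  have pos: "pos w x = length p"
    using assms(1) unfolding w by (rule pos_append_Cons)
  have "x < lnb w (length p)"
    using assms(5,7) lnb_append_Cons[of p x "R @ s"] unfolding w by auto
  moreover have "rnb w (length p) < x"
    using assms(3) R_less rnb_append_Cons[of p x "R @ s"] unfolding w by simp
  moreover have "x \<in> set w"
    unfolding w by simp
  ultimately have ddes: "is_ddes w x"
    unfolding is_ddes_def pos by simp
  have w_j: "w = (p @ x # butlast R) @ last R # s" and len_j: "length (p @ x # butlast R) = j"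
    using assms(3) unfolding w j_def by simp_all
  have R_at: "w ! (Suc (length p) + i) = R ! i" if "i < length R" for i
    using that unfolding w by (simp add: nth_append)
  have "(LEAST j. length p < j \<and> j < length w \<and> w ! j < x \<and> x < rnb w j) = j"
  proof (rule Least_equality)
    have "w ! j = last R"
      unfolding len_j[symmetric] by (subst w_j) (rule nth_append_length)
    then have "w ! j < x"
      using assms(3) R_less by simp
    moreover have "x < rnb w j"
      using rnb_append_Cons[of "p @ x # butlast R" "last R" s] assms(6,7)
      unfolding w_j[symmetric] len_j by auto
    moreover have "length p < j" "j < length w"
      using assms(3) unfolding j_def w by auto
    ultimately show "length p < j \<and> j < length w \<and> w ! j < x \<and> x < rnb w j"
      by simp
  next
    fix i
    assume i: "length p < i \<and> i < length w \<and> w ! i < x \<and> x < rnb w i"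
    show "j \<le> i"
    proof (rule ccontr)
      assume "\<not> j \<le> i"
      define i' where "i' = i - Suc (length p)"
      have i': "i = Suc (length p) + i'" "Suc i' < length R"
        using i \<open>\<not> j \<le> i\<close> unfolding i'_def j_def by linarith+
      then have "Suc i \<noteq> length w"
        unfolding w by simp
      then have "rnb w i = R ! Suc i'"
        using R_at[of "Suc i'"] i' unfolding rnb_def by simp
      then have "rnb w i < x"
        using R_less i'(2) by simp
      with i show False
        by simp
    qed
  qed
  with ddes have "phi x w = move_to w (length p) j x"
    unfolding phi_def Let_def pos by simp
  also have "\<dots> = p @ R @ x # s"
    unfolding move_to_def Let_def w j_def by simp
  finally show ?thesis .
qed

lemma phi_double_ascent:
  assumes "distinct w" and w: "w = p @ L @ x # s" and "L \<noteq> []" and L_less: "\<forall>y\<in>set L. y < x"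
    and "p = [] \<or> x < last p" and "s = [] \<or> x < hd s" and "x < Suc (length w)"
  shows "phi x w = p @ x # L @ s"
proof -
  define k where "k = length (p @ L)"
  have pos: "pos w x = k"
    using assms(1) unfolding w k_def by (metis append_assoc pos_append_Cons)
  have "lnb w k < x" "x < rnb w k"
    using assms lnb_append_Cons[of "p @ L" x s] rnb_append_Cons[of "p @ L" x s]
    unfolding w k_def by auto
  moreover have "x \<in> set w"
    unfolding w by simp
  ultimately have dasc: "is_dasc w x" and not_ddes: "\<not> is_ddes w x"
    unfolding is_dasc_def is_ddes_def pos by auto
  have w_p: "w = p @ hd L # (tl L @ x # s)"
    using assms(3) unfolding w by simp
  have L_at: "w ! (length p + i) = L ! i" if "i < length L" for i
    using that unfolding w by (simp add: nth_append)
  have "(GREATEST j. j < k \<and> w ! j < x \<and> x < lnb w j) = length p"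
  proof (rule Greatest_equality)
    have "w ! length p = hd L"
      by (subst w_p) (rule nth_append_length)
    moreover have "x < lnb w (length p)"
      using lnb_append_Cons[of p "hd L" "tl L @ x # s"] assms(5,7)
      unfolding w_p[symmetric] by auto
    ultimately show "length p < k \<and> w ! length p < x \<and> x < lnb w (length p)"
      using assms(3) L_less unfolding k_def by auto
  next
    fix i
    assume i: "i < k \<and> w ! i < x \<and> x < lnb w i"
    show "i \<le> length p"
    proof (rule ccontr)
      assume "\<not> i \<le> length p"
      define i' where "i' = i - Suc (length p)"
      have i': "i = Suc (length p + i')" "Suc i' < length L"
        using i \<open>\<not> i \<le> length p\<close> unfolding i'_def k_def by auto
      then have "lnb w i = L ! i'"
        using L_at[of i'] unfolding lnb_def by simp
      then have "lnb w i < x"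
        using L_less i'(2) by simp
      with i show False
        by simp
    qed
  qed
  with dasc not_ddes have "phi x w = move_to w k (length p) x"
    unfolding phi_def Let_def pos by simp
  also have "\<dots> = p @ x # L @ s"
    unfolding move_to_def Let_def w k_def by simp
  finally show ?thesis .
qed

lemma phi_local:
  assumes "distinct w" and w: "w = p @ L @ x # R @ s" and "\<forall>y\<in>set L \<union> set R. y < x"
    and "p = [] \<or> x < last p" and "s = [] \<or> x < hd s" and "x < Suc (length w)"
  shows "phi x w = p @ (if (L = []) \<noteq> (R = []) then R @ x # L else L @ x # R) @ s"
proof -
  have pos: "pos w x = length (p @ L)"
    using assms(1) unfolding w by (metis append_assoc pos_append_Cons)
  consider "L = []" "R = []" | "L \<noteq> []" "R \<noteq> []" | "L = []" "R \<noteq> []" | "L \<noteq> []" "R = []"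
    by blast
  then show ?thesis
  proof cases
    case 1
    then have "x < lnb w (length p)" "x < rnb w (length p)"
      using assms lnb_append_Cons[of p x s] rnb_append_Cons[of p x s] unfolding w by auto
    then have "\<not> is_ddes w x" "\<not> is_dasc w x"
      using pos 1 unfolding is_ddes_def is_dasc_def by auto
    with 1 show ?thesis
      by (simp add: phi_eq_self w)
  next
    case 2
    then have "last L < x" "hd R < x"
      using assms(3) by auto
    moreover have "lnb w (length (p @ L)) = last L" "rnb w (length (p @ L)) = hd R"
      using 2 lnb_append_Cons[of "p @ L" x "R @ s"] rnb_append_Cons[of "p @ L" x "R @ s"]
      unfolding w by auto
    ultimately have "\<not> is_ddes w x" "\<not> is_dasc w x"
      using pos unfolding is_ddes_def is_dasc_def by auto
    with 2 show ?thesis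
      by (simp add: phi_eq_self w)
  next
    case 3
    then show ?thesis
      using phi_double_descent[of w p x R s] assms by simp
  next
    case 4
    then show ?thesis
      using phi_double_ascent[of w p L x s] assms by simp
  qed
qed

section \<open>\<open>\<Psi>'\<close> in terms of decreasing binary trees\<close>

lemma inorder_flip_unary_singleton:
  "decr_tree t \<Longrightarrow> distinct (inorder t) \<Longrightarrow> x \<in> set_tree t \<Longrightarrow>
   \<exists>p L R s. inorder t = p @ L @ x # R @ s \<and>
     inorder (flip_unary {x} t) = p @ (if (L = []) \<noteq> (R = []) then R @ x # L else L @ x # R) @ s \<and>
     (\<forall>y\<in>set L \<union> set R. y < x) \<and> (p = [] \<or> x < last p) \<and> (s = [] \<or> x < hd s)"
proof (induction t)
  case Leaf
  then show ?case by simp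
next
  case (Node l a r)
  have subtrees: "decr_tree l" "distinct (inorder l)" "decr_tree r" "distinct (inorder r)"
    using Node.prems by auto
  consider "x = a" | "x \<in> set_tree l" | "x \<in> set_tree r"
    using Node.prems by auto
  then show ?case
  proof cases
    case 1
    then have flip: "flip_unary {x} l = l" "flip_unary {x} r = r"
      using Node.prems by (auto simp: flip_unary_notin)
    show ?thesis
      by (rule exI[of _ "[]"], rule exI[of _ "inorder l"], rule exI[of _ "inorder r"], rule exI[of _ "[]"])
        (use 1 Node.prems flip in auto)
  next
    case 2
    then obtain p L R s where IH: "inorder l = p @ L @ x # R @ s"
      "inorder (flip_unary {x} l) = p @ (if (L = []) \<noteq> (R = []) then R @ x # L else L @ x # R) @ s"
      "\<forall>y\<in>set L \<union> set R. y < x" "p = [] \<or> x < last p" "s = [] \<or> x < hd s"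
      using Node.IH(1)[OF subtrees(1,2) 2] by blast
    have "x \<notin> set_tree r" "x < a"
      using 2 Node.prems by auto
    then have flip: "flip_unary {x} (Node l a r) = Node (flip_unary {x} l) a r"
      by (simp add: flip_unary_notin)
    show ?thesis
      by (rule exI[of _ p], rule exI[of _ L], rule exI[of _ R], rule exI[of _ "s @ a # inorder r"])
        (use IH flip \<open>x < a\<close> in \<open>cases s; auto\<close>)
  next
    case 3
    then obtain p L R s where IH: "inorder r = p @ L @ x # R @ s"
      "inorder (flip_unary {x} r) = p @ (if (L = []) \<noteq> (R = []) then R @ x # L else L @ x # R) @ s"
      "\<forall>y\<in>set L \<union> set R. y < x" "p = [] \<or> x < last p" "s = [] \<or> x < hd s"
      using Node.IH(2)[OF subtrees(3,4) 3] by blast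
    have "x \<notin> set_tree l" "x < a"
      using 3 Node.prems by auto
    then have flip: "flip_unary {x} (Node l a r) = Node l a (flip_unary {x} r)"
      by (simp add: flip_unary_notin)
    show ?thesis
      by (rule exI[of _ "inorder l @ a # p"], rule exI[of _ L], rule exI[of _ R], rule exI[of _ s])
        (use IH flip \<open>x < a\<close> in \<open>cases p rule: rev_cases; auto\<close>)
  qed
qed

lemma phi_inorder:
  assumes "decr_tree t" "distinct (inorder t)" "x \<in> set_tree t" "x < Suc (size t)"
  shows "phi x (inorder t) = inorder (flip_unary {x} t)"
proof -
  obtain p L R s where split: "inorder t = p @ L @ x # R @ s"
    and flip: "inorder (flip_unary {x} t) = p @ (if (L = []) \<noteq> (R = []) then R @ x # L else L @ x # R) @ s"
    and frame: "\<forall>y\<in>set L \<union> set R. y < x" "p = [] \<or> x < last p" "s = [] \<or> x < hd s"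
    using inorder_flip_unary_singleton[OF assms(1-3)] by blast
  show ?thesis
    unfolding flip by (rule phi_local[OF assms(2) split frame]) (use assms(4) in simp)
qed

lemma foldr_phi_inorder:
  assumes "decr_tree t" "distinct (inorder t)" "\<forall>y\<in>set_tree t. y < Suc (size t)"
    and "distinct xs" "set xs \<subseteq> set_tree t"
  shows "foldr phi xs (inorder t) = inorder (flip_unary (set xs) t)"
  using assms(4,5)
proof (induction xs)
  case Nil
  then show ?case by simp
next
  case (Cons x xs)
  let ?t = "flip_unary (set xs) t"
  have "foldr phi (x # xs) (inorder t) = phi x (inorder ?t)"
    using Cons by simp
  also have "\<dots> = inorder (flip_unary {x} ?t)"
    using assms Cons.prems by (intro phi_inorder) (auto simp: decr_tree_flip_unary distinct_flip_unary)
  also have "\<dots> = inorder (flip_unary (set (x # xs)) t)"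
    using Cons.prems assms(2) by (simp add: flip_unary_flip_unary)
  finally show ?case .
qed

lemma odd_nodes_eq:
  "distinct (inorder t) \<Longrightarrow> odd_nodes p t = {x \<in> set_tree t. odd (the (rdist t x) + p)}"
proof (induction t arbitrary: p)
  case Leaf
  then show ?case by simp
next
  case (Node l a r)
  then have disj: "a \<notin> set_tree l" "a \<notin> set_tree r" "set_tree l \<inter> set_tree r = {}"
    by auto
  have "the (rdist (Node l a r) x) = the (rdist l x)" if "x \<in> set_tree l" for x
    using that disj rdist_eq_None_iff[of l x] by (auto split: option.splits)
  moreover have "the (rdist (Node l a r) x) = Suc (the (rdist r x))" if "x \<in> set_tree r" for x
    using that disj rdist_eq_None_iff[of l x] rdist_eq_None_iff[of r x] by (auto split: option.splits)
  moreover have "the (rdist (Node l a r) a) = 0"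
    by simp
  moreover have "odd_nodes p l = {x \<in> set_tree l. odd (the (rdist l x) + p)}"
    "odd_nodes (Suc p) r = {x \<in> set_tree r. odd (the (rdist r x) + Suc p)}"
    using Node by auto
  ultimately show ?case
    using disj by (auto simp del: rdist.simps)
qed

section \<open>Permutations\<close>

lemma perms_D:
  assumes "w \<in> perms n"
  shows "distinct w" "set w = {1..n}" "length w = n"
proof -
  show "distinct w" "set w = {1..n}"
    using assms unfolding perms_def by auto
  then show "length w = n"
    using distinct_card by fastforce
qed

lemma finite_perms: "finite (perms n)"
proof (rule finite_subset)
  show "perms n \<subseteq> {w. set w \<subseteq> {1..n} \<and> length w = n}"
    using perms_D by blast
qed (simp add: finite_lists_length_eq)

lemma Odd_set_eq_odd_nodes: "distinct w \<Longrightarrow> Odd_set w = odd_nodes 0 (dbt w)"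
  unfolding Odd_set_def using odd_nodes_eq[of "dbt w" 0] by (simp add: inorder_dbt set_dbt)

lemma Psi_eq_inorder_flip_odd:
  assumes "w \<in> perms n"
  shows "Psi w = inorder (flip_odd 0 (dbt w))"
proof -
  let ?t = "dbt w"
  have t: "inorder ?t = w" "decr_tree ?t" "set_tree ?t = set w" "size ?t = n"
    using inorder_dbt[of w] set_dbt[of w] perms_D[OF assms] by (auto simp flip: length_inorder)
  then have "\<forall>y\<in>set_tree ?t. y < Suc (size ?t)"
    using perms_D(2)[OF assms] by auto
  then have "foldr phi (sorted_list_of_set (odd_nodes 0 ?t)) (inorder ?t) = inorder (flip_unary (odd_nodes 0 ?t) ?t)"
    using foldr_phi_inorder[of ?t "sorted_list_of_set (odd_nodes 0 ?t)"] t perms_D(1)[OF assms]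
      finite_odd_nodes[of 0 ?t] odd_nodes_subset[of 0 ?t] by auto
  then show ?thesis
    unfolding Psi_def using t perms_D(1)[OF assms]
    by (simp add: Odd_set_eq_odd_nodes flip_odd_eq_flip_unary)
qed

lemma inj_on_Psi: "inj_on Psi (perms n)"
proof (rule inj_onI)
  fix w w'
  assume w: "w \<in> perms n" and w': "w' \<in> perms n" and "Psi w = Psi w'"
  then have "inorder (flip_odd 0 (dbt w)) = inorder (flip_odd 0 (dbt w'))"
    by (simp add: Psi_eq_inorder_flip_odd)
  moreover have "decr_tree (flip_odd 0 (dbt v)) \<and> distinct (inorder (flip_odd 0 (dbt v)))"
    if "v \<in> perms n" for v
    using perms_D(1)[OF that] inorder_dbt[of v] by (simp add: decr_tree_flip_odd)
  ultimately have "flip_odd 0 (dbt w) = flip_odd 0 (dbt w')"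
    using w w' by (metis dbt_inorder)
  then have "inorder (dbt w) = inorder (dbt w')"
    by (metis flip_odd_inject)
  then show "w = w'"
    using perms_D(1)[OF w] perms_D(1)[OF w'] by (simp add: inorder_dbt)
qed

lemma veh_eq_des_Psi:
  assumes "w \<in> perms n"
  shows "veh w = des (Psi w)"
proof -
  let ?t = "dbt w"
  have dist: "distinct w" "distinct (inorder ?t)" "decr_tree ?t"
    using perms_D(1)[OF assms] inorder_dbt[of w] by auto
  have "even (uht w y) \<longleftrightarrow> odd (the (rdist ?t y))" if "y \<in> set w" for y
    using rdist_dbt_uht[OF dist(1) that] by (cases "uht w y") auto
  then have "{y \<in> set w. even (uht w y)} = odd_nodes 0 ?t"
    using odd_nodes_eq[OF dist(2), of 0] dist(1) by (auto simp: set_dbt)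
  then have "veh w = card (odd_nodes 0 ?t)"
    unfolding veh_def by simp
  also have "\<dots> = right_children (flip_odd 0 ?t)"
    using right_children_flip_odd[OF dist(2), of 0] by simp
  also have "\<dots> = descents (inorder (flip_odd 0 ?t))"
    using decr_tree_flip_odd[OF dist(3,2)] by (simp add: descents_inorder)
  also have "\<dots> = des (Psi w)"
    by (simp add: Psi_eq_inorder_flip_odd[OF assms] des_eq_descents)
  finally show ?thesis .
qed

lemma foldr_phi_mem:
  assumes "\<forall>x\<in>A. phi x ` T \<subseteq> T" "w \<in> T" "set xs \<subseteq> A"
  shows "foldr phi xs w \<in> T"
  using assms(3) by (induction xs) (use assms(1,2) in auto)

lemma Psi_mem:
  assumes "T \<subseteq> perms n" "\<forall>x\<in>{1..n}. phi x ` T \<subseteq> T" "w \<in> T"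
  shows "Psi w \<in> T"
proof -
  have "Odd_set w \<subseteq> {1..n}"
    using perms_D(2) assms(1,3) unfolding Odd_set_def by blast
  then show ?thesis
    unfolding Psi_def using assms(2,3) by (intro foldr_phi_mem) (auto simp: Odd_set_def)
qed

theorem theorem7p2:
  fixes n :: nat and T :: "nat list set"
  assumes "T \<subseteq> perms n"
    and "\<forall>x\<in>{1..n}. phi x ` T \<subseteq> T"
  shows "bij_betw Psi T T \<and> (\<forall>\<pi>\<in>T. veh \<pi> = des (Psi \<pi>))"
proof
  have "inj_on Psi T"
    using inj_on_Psi assms(1) by (rule inj_on_subset)
  moreover have "Psi ` T \<subseteq> T"
    using Psi_mem[OF assms] by blast
  moreover have "finite T"
    using finite_perms assms(1) by (rule finite_subset[rotated])
  ultimately show "bij_betw Psi T T"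
    by (simp add: bij_betw_def endo_inj_surj)
next
  show "\<forall>\<pi>\<in>T. veh \<pi> = des (Psi \<pi>)"
    using veh_eq_des_Psi assms(1) by blast
qed

end
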